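(* In the abruptly-changing incentivized bandit with reward drift where the principal uses Sliding Window UCB with window $\tau$ (as in the context), for all arms $a\in\{1,\dots,K\}$ and all $t\in\{1,\dots,T\}$, $$D_t(\tau,a)\le l\,N_t(a)\sqrt{\xi\log(\min(t,\tau))}.$$
   Context: Arms $\{1,\dots,K\}$, horizon $T$; true rewards $X_t(a)\in[0,1]$ independent with means $\mu_t(a)$. Protocol: the principal recommends $a_t$ by Sliding Window UCB; greedy choice $g_t=\arg\max_a\bar X_t(\tau,a)$; if $a_t\ne g_t$ the principal pays $\chi_t=\bar X_t(\tau,g_t)-\bar X_t(\tau,a_t)$ and the observed reward is $r_t=X_t(a_t)+\delta_t$, $\delta_t=f_t(\chi_t)$; otherwise $\delta_t=0$, $r_t=X_t(a_t)$. Each $f_t$ is non-decreasing, $f_t(0)=0$, Lipschitz with constant $l_t$; $l=\max_tl_t$. Sliding Window UCB (window $\tau$, constant $\xi$): $N_t(\tau,a)$ = number of pulls of $a$ in the last $\tau$ rounds, $\bar X_t(\tau,a)$ = average observed reward of $a$ over those rounds, $c_t(\tau,a)=\sqrt{\xi\log(\min(t,\tau))/N_t(\tau,a)}$; pull arm $t$ for $t\le K$, then $\arg\max_a\bar X_t(\tau,a)+c_t(\tau,a)$. $N_t(a)=\sum_{s\le t}\mathbf1(a_s=a)$, and $D_t(\tau,a)=\sum_{s\le t}\mathbf1(a_s=a)\delta_s$ is the total reward drift contributed by arm $a$ up to time $t$. *)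

theory Defs
  imports Complex_Main
begin

text \<open>Rounds are numbered 1,2,...; arms are 1..K. act s is the recommended (pulled)
arm a_s, r s the observed reward r_s.\<close>

definition arms :: "nat \<Rightarrow> nat set" where
  "arms K = {1..K}"

definition window :: "nat \<Rightarrow> nat \<Rightarrow> nat set" where
  "window tau t = {s. 1 \<le> s \<and> s < t \<and> t \<le> s + tau}"

definition Nwin :: "nat \<Rightarrow> (nat \<Rightarrow> nat) \<Rightarrow> nat \<Rightarrow> nat \<Rightarrow> nat" where
  "Nwin tau act t a = card {s \<in> window tau t. act s = a}"

text \<open>bar X_t(tau,a): average observed reward of arm a over those rounds
(only meaningful when Nwin > 0).\<close>
definition Xbar :: "nat \<Rightarrow> (nat \<Rightarrow> nat) \<Rightarrow> (nat \<Rightarrow> real) \<Rightarrow> nat \<Rightarrow> nat \<Rightarrow> real" where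
  "Xbar tau act r t a = (\<Sum>s\<in>{s \<in> window tau t. act s = a}. r s) / real (Nwin tau act t a)"

definition cw :: "real \<Rightarrow> nat \<Rightarrow> (nat \<Rightarrow> nat) \<Rightarrow> nat \<Rightarrow> nat \<Rightarrow> real" where
  "cw xi tau act t a = sqrt (xi * ln (real (min t tau)) / real (Nwin tau act t a))"

definition Ntot :: "(nat \<Rightarrow> nat) \<Rightarrow> nat \<Rightarrow> nat \<Rightarrow> nat" where
  "Ntot act t a = card {s \<in> {1..t}. act s = a}"

definition Drift :: "(nat \<Rightarrow> nat) \<Rightarrow> (nat \<Rightarrow> real) \<Rightarrow> nat \<Rightarrow> nat \<Rightarrow> real" where
  "Drift act \<delta> t a = (\<Sum>s\<in>{1..t}. if act s = a then \<delta> s else 0)"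

end

theory Submission
  imports Defs
begin

(* Whenever the principal pays an incentive, every arm has been explored in the current window
   and the UCB rule recommended a_t over the greedy arm g_t, so the payment is at most the
   confidence width c_t(tau, a_t) <= sqrt (xi log (min t tau)). Monotonicity, f_t(0) = 0 and the
   Lipschitz bound turn this into delta_t <= l sqrt (xi log (min t tau)); summing over the
   N_t(a) rounds in which a was pulled gives the claim. *)

definition ucb_radius :: "real \<Rightarrow> nat \<Rightarrow> nat \<Rightarrow> real" where
  "ucb_radius xi tau t = sqrt (xi * ln (real (min t tau)))"

(* Holds for n = 0 as well, since ln 0 = 0. *)
lemma ln_of_nat_nonneg: "0 \<le> ln (real n)"
  by (cases n) auto

lemma ucb_radius_nonneg: "0 \<le> xi \<Longrightarrow> 0 \<le> ucb_radius xi tau t"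
  by (simp add: ucb_radius_def ln_of_nat_nonneg)

lemma ucb_radius_mono:
  assumes "0 \<le> xi" and "s \<le> t"
  shows "ucb_radius xi tau s \<le> ucb_radius xi tau t"
proof (cases "min s tau = 0")
  case False
  then have "ln (real (min s tau)) \<le> ln (real (min t tau))"
    using \<open>s \<le> t\<close> by (auto simp: min_def)
  then show ?thesis
    using assms(1) by (simp add: ucb_radius_def mult_left_mono)
qed (use assms(1) in \<open>simp add: ucb_radius_def ln_of_nat_nonneg\<close>)

lemma cw_nonneg: "0 \<le> xi \<Longrightarrow> 0 \<le> cw xi tau act t a"
  by (simp add: cw_def ln_of_nat_nonneg)

lemma cw_le_ucb_radius:
  assumes "0 \<le> xi" and "0 < Nwin tau act t a"
  shows "cw xi tau act t a \<le> ucb_radius xi tau t"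
  unfolding cw_def ucb_radius_def
proof (rule real_sqrt_le_mono)
  have "0 \<le> xi * ln (real (min t tau))"
    using assms(1) by (simp add: ln_of_nat_nonneg)
  then show "xi * ln (real (min t tau)) / real (Nwin tau act t a) \<le> xi * ln (real (min t tau))"
    using assms(2) by (simp add: divide_le_eq mult_le_cancel_left1)
qed

lemma Xbar_gap_le_ucb_radius:
  assumes "0 \<le> xi" and "0 < Nwin tau act t a"
    and "Xbar tau act r t b + cw xi tau act t b \<le> Xbar tau act r t a + cw xi tau act t a"
  shows "Xbar tau act r t b - Xbar tau act r t a \<le> ucb_radius xi tau t"
  using assms cw_nonneg[OF assms(1), of tau act t b] cw_le_ucb_radius[OF assms(1,2)]
  by linarith

lemma Nwin_pos_imp_initialisation_done:
  assumes init: "\<And>s. s \<in> {1..t} \<Longrightarrow> s \<le> K \<Longrightarrow> act s = s"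
    and "1 \<le> t" and "0 < Nwin tau act t (act t)"
  shows "K < t"
proof (rule ccontr)
  assume "\<not> K < t"
  then have "act s = s" if "s \<in> window tau t \<or> s = t" for s
    using that \<open>1 \<le> t\<close> by (intro init) (auto simp: window_def)
  then have "{s \<in> window tau t. act s = act t} = {}"
    by (auto simp: window_def)
  then have "Nwin tau act t (act t) = 0"
    by (simp only: Nwin_def) simp
  with assms(3) show False by simp
qed

lemma lipschitz_const_nonneg:
  fixes f :: "real \<Rightarrow> real"
  assumes "\<And>x y. \<bar>f x - f y\<bar> \<le> L * \<bar>x - y\<bar>"
  shows "0 \<le> L"
  using assms[of 1 0] by simp

lemma mono_lipschitz_le:
  fixes f :: "real \<Rightarrow> real"
  assumes "mono f" and "f 0 = 0" and lip: "\<And>x y. \<bar>f x - f y\<bar> \<le> L * \<bar>x - y\<bar>"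
    and "x \<le> c" and "0 \<le> c"
  shows "f x \<le> L * c"
proof (cases "0 \<le> x")
  case True
  have "f x \<le> \<bar>f x - f 0\<bar>" using \<open>f 0 = 0\<close> by simp
  also have "\<dots> \<le> L * x" using lip[of x 0] True by simp
  also have "\<dots> \<le> L * c"
    using \<open>x \<le> c\<close> lipschitz_const_nonneg[OF lip] by (simp add: mult_left_mono)
  finally show ?thesis .
next
  case False
  then have "f x \<le> 0" using \<open>mono f\<close> \<open>f 0 = 0\<close> by (metis linear monoD)
  also have "0 \<le> L * c" using lipschitz_const_nonneg[OF lip] \<open>0 \<le> c\<close> by simp
  finally show ?thesis .
qed

lemma Drift_le_Ntot_mult:
  assumes "\<And>s. s \<in> {1..t} \<Longrightarrow> act s = a \<Longrightarrow> \<delta> s \<le> B"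
  shows "Drift act \<delta> t a \<le> real (Ntot act t a) * B"
proof -
  have "Drift act \<delta> t a = (\<Sum>s\<in>{s \<in> {1..t}. act s = a}. \<delta> s)"
    unfolding Drift_def by (rule sum.inter_filter[symmetric]) simp
  also have "\<dots> \<le> real (Ntot act t a) * B"
    unfolding Ntot_def by (rule sum_bounded_above) (use assms in auto)
  finally show ?thesis .
qed

theorem lemma4:
  fixes K T tau :: nat and xi l :: real
    and X :: "nat \<Rightarrow> nat \<Rightarrow> real"
    and f :: "nat \<Rightarrow> real \<Rightarrow> real" and lc :: "nat \<Rightarrow> real"
    and act g :: "nat \<Rightarrow> nat" and r \<chi> \<delta> :: "nat \<Rightarrow> real"
  assumes K_pos: "1 \<le> K" and tau_pos: "1 \<le> tau" and xi_pos: "0 < xi"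
    and rewards: "\<And>t a. t \<in> {1..T} \<Longrightarrow> a \<in> arms K \<Longrightarrow> 0 \<le> X t a \<and> X t a \<le> 1"
    and f_mono: "\<And>t. mono (f t)"
    and f_zero: "\<And>t. f t 0 = 0"
    and f_lip: "\<And>t x y. \<bar>f t x - f t y\<bar> \<le> lc t * \<bar>x - y\<bar>"
    and l_def: "l = (MAX t\<in>{1..T}. lc t)"
    and act_arm: "\<And>t. t \<in> {1..T} \<Longrightarrow> act t \<in> arms K"
    and act_init: "\<And>t. t \<in> {1..T} \<Longrightarrow> t \<le> K \<Longrightarrow> act t = t"
    and act_unexplored: "\<And>t. t \<in> {1..T} \<Longrightarrow> K < t \<Longrightarrow>
          (\<exists>b\<in>arms K. Nwin tau act t b = 0) \<Longrightarrow> Nwin tau act t (act t) = 0"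
    and act_ucb: "\<And>t b. t \<in> {1..T} \<Longrightarrow> K < t \<Longrightarrow>
          (\<forall>b'\<in>arms K. 0 < Nwin tau act t b') \<Longrightarrow> b \<in> arms K \<Longrightarrow>
          Xbar tau act r t b + cw xi tau act t b
            \<le> Xbar tau act r t (act t) + cw xi tau act t (act t)"
    and greedy: "\<And>t. t \<in> {1..T} \<Longrightarrow> 0 < Nwin tau act t (act t) \<Longrightarrow>
          g t \<in> arms K \<and> 0 < Nwin tau act t (g t) \<and>
          (\<forall>b\<in>arms K. 0 < Nwin tau act t b \<longrightarrow> Xbar tau act r t b \<le> Xbar tau act r t (g t))"
    and chi_def: "\<And>t. t \<in> {1..T} \<Longrightarrow> \<chi> t =
          (if 0 < Nwin tau act t (act t) \<and> act t \<noteq> g t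
           then Xbar tau act r t (g t) - Xbar tau act r t (act t) else 0)"
    and delta_def: "\<And>t. t \<in> {1..T} \<Longrightarrow> \<delta> t =
          (if 0 < Nwin tau act t (act t) \<and> act t \<noteq> g t then f t (\<chi> t) else 0)"
    and obs: "\<And>t. t \<in> {1..T} \<Longrightarrow> r t = X t (act t) + \<delta> t"
  shows "\<forall>a\<in>arms K. \<forall>t\<in>{1..T}.
           Drift act \<delta> t a \<le> l * real (Ntot act t a) * sqrt (xi * ln (real (min t tau)))"
proof -
  have lc_nonneg: "0 \<le> lc s" for s
    using f_lip by (rule lipschitz_const_nonneg)
  have drift_round: "\<delta> s \<le> lc s * ucb_radius xi tau s" if s: "s \<in> {1..T}" for s
  proof (cases "0 < Nwin tau act s (act s) \<and> act s \<noteq> g s")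
    case False
    then have "\<delta> s = 0" using delta_def[OF s] by auto
    then show ?thesis
      using lc_nonneg[of s] ucb_radius_nonneg[of xi tau s] xi_pos by simp
  next
    case True
    have "K < s"
      using True s act_init by (intro Nwin_pos_imp_initialisation_done[of s K act tau]) auto
    then have "\<forall>b\<in>arms K. 0 < Nwin tau act s b"
      using act_unexplored[OF s] True by (metis gr0I)
    then have "\<chi> s \<le> ucb_radius xi tau s"
      using True greedy[OF s] chi_def[OF s] act_ucb[OF s \<open>K < s\<close>] xi_pos
      by (auto intro!: Xbar_gap_le_ucb_radius)
    then show ?thesis
      using True delta_def[OF s] ucb_radius_nonneg[of xi tau s] xi_pos
      by (auto intro: mono_lipschitz_le[OF f_mono f_zero f_lip])
  qed
  have drift_le: "\<delta> s \<le> l * ucb_radius xi tau t" if "t \<in> {1..T}" "s \<in> {1..t}" for s t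
  proof -
    have "\<delta> s \<le> lc s * ucb_radius xi tau s"
      using that by (intro drift_round) auto
    also have "\<dots> \<le> l * ucb_radius xi tau t"
    proof (rule mult_mono')
      show "lc s \<le> l" unfolding l_def using that by (intro Max_ge) auto
      show "ucb_radius xi tau s \<le> ucb_radius xi tau t"
        using that xi_pos by (intro ucb_radius_mono) auto
    qed (use lc_nonneg ucb_radius_nonneg xi_pos in auto)
    finally show ?thesis .
  qed
  show ?thesis
    using Drift_le_Ntot_mult[OF drift_le] by (simp add: ucb_radius_def mult_ac)
qed

end
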